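(* Let $\mathfrak{g}_1,\mathfrak{g}_2$ be $S$-algebras such that $f_i(\mathfrak{g}_i)\subset C^1\mathfrak{g}_i$ for every $f_i\in\mathrm{Der}(\mathfrak{g}_i)$, $i=1,2$. Then $\mathfrak{g}_1\underline{\times}\mathfrak{g}_2$ is characteristically nilpotent and $D(\mathfrak{g}_1\underline{\times}\mathfrak{g}_2)\subset C^1(\mathfrak{g}_1\underline{\times}\mathfrak{g}_2)$ for every derivation $D$ of $\mathfrak{g}_1\underline{\times}\mathfrak{g}_2$.
   Context: All Lie algebras are finite-dimensional, complex, nilpotent and nonabelian. $C^1\mathfrak{g}=[\mathfrak{g},\mathfrak{g}]$. A nilpotent $\mathfrak{g}$ is characteristically nilpotent if $\mathfrak{g}^{[m]}=0$ for some $m$, where $\mathfrak{g}^{[1]}=\{f(Y): f\in\mathrm{Der}(\mathfrak{g}),Y\in\mathfrak{g}\}$ and $\mathfrak{g}^{[k]}=\mathrm{Der}(\mathfrak{g})(\mathfrak{g}^{[k-1]})$. Product by generators: for $\mathfrak{g}_1,\mathfrak{g}_2$ of dimensions $m_1,m_2$ take bases $\{X_1,\dots,X_{m_1}\}$, $\{X'_1,\dots,X'_{m_2}\}$ such that $X_1,\dots,X_{n_1}$ generate $\mathfrak{g}_1$ and $X_{n_1+1},\dots,X_{m_1}$ span $C^1\mathfrak{g}_1$, and similarly for $\mathfrak{g}_2$ with $n_2$ generators. $\mathfrak{g}_1\underline{\times}\mathfrak{g}_2$ is the Lie algebra on $\mathfrak{g}_1\oplus\mathfrak{g}_2\oplus\mathfrak{g}_3$,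 $\mathfrak{g}_3=\langle Z_1,\dots,Z_{n_1n_2}\rangle$, with the brackets of $\mathfrak{g}_1$ and of $\mathfrak{g}_2$, $[X_i,X'_j]=Z_{(i-1)n_2+j}$ for $i\le n_1$, $j\le n_2$, $[X_i,X'_j]=0$ otherwise, and $\mathfrak{g}_3$ central. For $D$ a derivation of $\mathfrak{g}_1\underline{\times}\mathfrak{g}_2$ write $D_{21}=p_2D|_{\mathfrak{g}_1}$ with $p_2$ the projection onto $\mathfrak{g}_2$. A nilpotent Lie algebra $\mathfrak{g}_1$ is an $S$-algebra if for every Lie algebra $\mathfrak{g}_2$ and every derivation $D$ of $\mathfrak{g}_1\underline{\times}\mathfrak{g}_2$ one has $D_{21}(\mathfrak{g}_1)\subset C^1\mathfrak{g}_2$. *)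

theory Defs
  imports Complex_Main "HOL-Library.Function_Algebras"
begin

text \<open>A finite-dimensional complex Lie
algebra is given by its dimension and structure constants with respect to a basis
e_0, ..., e_(dim-1): the coefficient of e_k in [e_i, e_j] is lsc L i j k.\<close>

type_synonym vec = "nat \<Rightarrow> complex"

record lie_sc =
  ldim :: nat
  lsc :: "nat \<Rightarrow> nat \<Rightarrow> nat \<Rightarrow> complex"

definition carrier_L :: "lie_sc \<Rightarrow> vec set" where
  "carrier_L L = {v. \<forall>i. ldim L \<le> i \<longrightarrow> v i = 0}"

definition br :: "lie_sc \<Rightarrow> vec \<Rightarrow> vec \<Rightarrow> vec" where
  "br L x y = (\<lambda>k. if k < ldim L
      then (\<Sum>i<ldim L. \<Sum>j<ldim L. x i * y j * lsc L i j k) else 0)"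

definition smul :: "complex \<Rightarrow> vec \<Rightarrow> vec" where
  "smul a x = (\<lambda>i. a * x i)"

definition unitv :: "nat \<Rightarrow> vec" where
  "unitv k = (\<lambda>i. if i = k then 1 else 0)"

definition cspan :: "vec set \<Rightarrow> vec set" where
  "cspan S = {(\<Sum>u\<in>F. smul (a u) u) | F a. finite F \<and> F \<subseteq> S}"

definition lie_algebra :: "lie_sc \<Rightarrow> bool" where
  "lie_algebra L \<longleftrightarrow>
     (\<forall>x\<in>carrier_L L. br L x x = 0) \<and>
     (\<forall>x\<in>carrier_L L. \<forall>y\<in>carrier_L L. \<forall>z\<in>carrier_L L.
        br L x (br L y z) + br L y (br L z x) + br L z (br L x y) = 0)"

definition C1 :: "lie_sc \<Rightarrow> vec set" where
  "C1 L = cspan {br L x y | x y. x \<in> carrier_L L \<and> y \<in> carrier_L L}"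

fun lcs :: "lie_sc \<Rightarrow> nat \<Rightarrow> vec set" where
  "lcs L 0 = carrier_L L"
| "lcs L (Suc k) = cspan {br L x y | x y. x \<in> carrier_L L \<and> y \<in> lcs L k}"

definition nilpotent_L :: "lie_sc \<Rightarrow> bool" where
  "nilpotent_L L \<longleftrightarrow> (\<exists>k. lcs L k = {0})"

definition nna_lie :: "lie_sc \<Rightarrow> bool" where
  "nna_lie L \<longleftrightarrow> lie_algebra L \<and> nilpotent_L L \<and> C1 L \<noteq> {0}"

text \<open>The basis is adapted with n generators: e_0..e_(n-1) generate and
e_n..e_(dim-1) span C^1 g.\<close>
definition adapted :: "lie_sc \<Rightarrow> nat \<Rightarrow> bool" where
  "adapted L n \<longleftrightarrow> n \<le> ldim L \<and>
     C1 L = cspan {unitv k | k. n \<le> k \<and> k < ldim L}"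

definition derivation :: "lie_sc \<Rightarrow> (vec \<Rightarrow> vec) \<Rightarrow> bool" where
  "derivation L D \<longleftrightarrow>
     (\<forall>x\<in>carrier_L L. D x \<in> carrier_L L) \<and>
     (\<forall>x\<in>carrier_L L. \<forall>y\<in>carrier_L L. D (x + y) = D x + D y) \<and>
     (\<forall>a. \<forall>x\<in>carrier_L L. D (smul a x) = smul a (D x)) \<and>
     (\<forall>x\<in>carrier_L L. \<forall>y\<in>carrier_L L. D (br L x y) = br L (D x) y + br L x (D y))"

fun der_seq :: "lie_sc \<Rightarrow> nat \<Rightarrow> vec set" where
  "der_seq L 0 = carrier_L L"
| "der_seq L (Suc k) = {f y | f y. derivation L f \<and> y \<in> der_seq L k}"

definition char_nilpotent :: "lie_sc \<Rightarrow> bool" where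
  "char_nilpotent L \<longleftrightarrow> nilpotent_L L \<and> (\<exists>m\<ge>1. der_seq L m = {0})"

text \<open>Layout of the basis of the product: indices 0..m1-1 are
X_1..X_m1 of g1, indices m1..m1+m2-1 are X'_1..X'_m2 of g2, and index m1+m2+(i*n2+j)
is Z_((i-1)n2+j) in 1-based notation, i.e. [X_(i+1), X'_(j+1)] for i<n1, j<n2.\<close>
definition prod_gen :: "lie_sc \<Rightarrow> nat \<Rightarrow> lie_sc \<Rightarrow> nat \<Rightarrow> lie_sc" where
  "prod_gen L1 n1 L2 n2 = (let m1 = ldim L1; m2 = ldim L2 in
     \<lparr> ldim = m1 + m2 + n1 * n2,
       lsc = (\<lambda>i j k.
         if i < m1 \<and> j < m1 \<and> k < m1 then lsc L1 i j k
         else if m1 \<le> i \<and> i < m1 + m2 \<and> m1 \<le> j \<and> j < m1 + m2 \<and> m1 \<le> k \<and> k < m1 + m2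
           then lsc L2 (i - m1) (j - m1) (k - m1)
         else if i < n1 \<and> m1 \<le> j \<and> j < m1 + n2 \<and> k = m1 + m2 + i * n2 + (j - m1) then 1
         else if j < n1 \<and> m1 \<le> i \<and> i < m1 + n2 \<and> k = m1 + m2 + j * n2 + (i - m1) then -1
         else 0) \<rparr>)"

definition proj2 :: "lie_sc \<Rightarrow> lie_sc \<Rightarrow> vec \<Rightarrow> vec" where
  "proj2 L1 L2 v = (\<lambda>i. if i < ldim L2 then v (ldim L1 + i) else 0)"

text \<open>S-algebra: for every Lie algebra g2 (with adapted basis) and every derivation D of
the product, D_21(g1) is contained in C^1 g2. (g1 is embedded in the product as the
vectors supported on the first ldim L1 coordinates, i.e. carrier_L L1 itself.)\<close>
definition S_algebra :: "lie_sc \<Rightarrow> nat \<Rightarrow> bool" where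
  "S_algebra L1 n1 \<longleftrightarrow> nna_lie L1 \<and> adapted L1 n1 \<and>
     (\<forall>L2 n2. nna_lie L2 \<and> adapted L2 n2 \<longrightarrow>
        (\<forall>D. derivation (prod_gen L1 n1 L2 n2) D \<longrightarrow>
           (\<forall>x\<in>carrier_L L1. proj2 L1 L2 (D x) \<in> C1 L2)))"

end

theory Submission
  imports Defs
begin

text \<open>Let \<open>\<frak>g = \<frak>g\<^sub>1 \<oplus> \<frak>g\<^sub>2 \<oplus> \<frak>g\<^sub>3\<close> be the product by generators and \<open>D\<close> a
  derivation of it. The \<open>\<frak>g\<^sub>1\<close>-component of \<open>D\<close> on \<open>\<frak>g\<^sub>1\<close> is a derivation of \<open>\<frak>g\<^sub>1\<close>,
  hence maps into \<open>C\<^sup>1\<frak>g\<^sub>1\<close>, and its \<open>\<frak>g\<^sub>2\<close>-component lands in \<open>C\<^sup>1\<frak>g\<^sub>2\<close>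
  because \<open>\<frak>g\<^sub>1\<close> is an \<open>S\<close>-algebra; the isomorphism exchanging the two factors gives the same
  on \<open>\<frak>g\<^sub>2\<close>. The central summand \<open>\<frak>g\<^sub>3\<close> is spanned by brackets, so it lies in \<open>C\<^sup>1\<frak>g\<close>,
  which every derivation preserves. As \<open>C\<^sup>1\<frak>g\<^sub>1 + C\<^sup>1\<frak>g\<^sub>2 + \<frak>g\<^sub>3 \<subseteq> C\<^sup>1\<frak>g\<close>, every
  derivation maps \<open>\<frak>g\<close> into \<open>C\<^sup>1\<frak>g\<close>.

  Such derivations raise the lower central series by one step, so \<open>\<frak>g\<^bsup>[k]\<^esup> \<subseteq> C\<^sup>k\<frak>g\<close>,
  which vanishes for large \<open>k\<close> because \<open>\<frak>g\<close> is nilpotent: elements of \<open>C\<^sup>1\<frak>g\<^sub>i\<close> have no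
  components along the generators, so brackets with \<open>C\<^sup>1\<frak>g\<close> have no \<open>\<frak>g\<^sub>3\<close>-component.\<close>

section \<open>Linear algebra on coordinate vectors\<close>

lemma sum_fun_apply: "(sum f F) i = (\<Sum>u\<in>F. f u i)" for f :: "'b \<Rightarrow> vec"
  by (induction F rule: infinite_finite_induct) auto

lemma smul_apply [simp]: "smul a x i = a * x i"
  by (simp add: smul_def)

lemma smul_zero_left [simp]: "smul 0 x = 0"
  and smul_zero_right [simp]: "smul a 0 = 0"
  by (auto simp: fun_eq_iff)

lemma smul_add_left: "smul (a + b) u = smul a u + smul b u"
  and smul_smul: "smul a (smul b u) = smul (a * b) u"
  and smul_sum: "smul c (sum f F) = (\<Sum>u\<in>F. smul c (f u))"
  by (auto simp: fun_eq_iff algebra_simps sum_fun_apply sum_distrib_left)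

definition csubspace :: "vec set \<Rightarrow> bool" where
  "csubspace V \<longleftrightarrow> 0 \<in> V \<and> (\<forall>x\<in>V. \<forall>y\<in>V. x + y \<in> V) \<and> (\<forall>a. \<forall>x\<in>V. smul a x \<in> V)"

lemma csubspace_0: "csubspace V \<Longrightarrow> 0 \<in> V"
  and csubspace_add: "csubspace V \<Longrightarrow> x \<in> V \<Longrightarrow> y \<in> V \<Longrightarrow> x + y \<in> V"
  and csubspace_smul: "csubspace V \<Longrightarrow> x \<in> V \<Longrightarrow> smul a x \<in> V"
  by (simp_all add: csubspace_def)

lemma csubspace_neg:
  assumes "csubspace V" "x \<in> V"
  shows "- x \<in> V"
proof -
  have "smul (-1) x = - x" by (simp add: fun_eq_iff)
  with csubspace_smul[OF assms] show ?thesis by metis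
qed

lemma csubspace_sum: "csubspace V \<Longrightarrow> (\<And>u. u \<in> F \<Longrightarrow> f u \<in> V) \<Longrightarrow> sum f F \<in> V"
  by (induction F rule: infinite_finite_induct) (auto simp: csubspace_0 csubspace_add)

lemma csubspace_UNIV: "csubspace UNIV"
  and csubspace_zero: "csubspace {0}"
  and csubspace_carrier_L: "csubspace (carrier_L L)"
  by (auto simp: csubspace_def carrier_L_def)

lemma cspan_sum_extend:
  assumes "finite G" "F \<subseteq> G"
  shows "(\<Sum>u\<in>F. smul (a u) u) = (\<Sum>u\<in>G. smul (if u \<in> F then a u else 0) u)"
  using assms by (simp add: sum.mono_neutral_right[OF assms] cong: sum.cong)

lemma csubspace_cspan: "csubspace (cspan S)"
  unfolding csubspace_def
proof (intro conjI ballI allI)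
  show "0 \<in> cspan S"
    unfolding cspan_def by (rule CollectI, rule exI[of _ "{}"]) auto
next
  fix x y assume "x \<in> cspan S" "y \<in> cspan S"
  then obtain F a G b where x: "x = (\<Sum>u\<in>F. smul (a u) u)" "finite F" "F \<subseteq> S"
    and y: "y = (\<Sum>u\<in>G. smul (b u) u)" "finite G" "G \<subseteq> S"
    unfolding cspan_def by blast
  let ?c = "\<lambda>u. (if u \<in> F then a u else 0) + (if u \<in> G then b u else 0)"
  have "x + y = (\<Sum>u\<in>F \<union> G. smul (?c u) u)"
    using x y cspan_sum_extend[of "F \<union> G" F a] cspan_sum_extend[of "F \<union> G" G b]
    by (simp add: smul_add_left sum.distrib)
  then show "x + y \<in> cspan S"
    unfolding cspan_def using x y by (intro CollectI exI[of _ "F \<union> G"] exI[of _ ?c]) auto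
next
  fix c x assume "x \<in> cspan S"
  then obtain F a where x: "x = (\<Sum>u\<in>F. smul (a u) u)" "finite F" "F \<subseteq> S"
    unfolding cspan_def by blast
  then have "smul c x = (\<Sum>u\<in>F. smul (c * a u) u)"
    by (simp add: smul_sum smul_smul)
  then show "smul c x \<in> cspan S"
    unfolding cspan_def using x by (intro CollectI exI[of _ F] exI[of _ "\<lambda>u. c * a u"]) auto
qed

lemma cspan_base: "u \<in> S \<Longrightarrow> u \<in> cspan S"
  unfolding cspan_def by (rule CollectI, rule exI[of _ "{u}"], rule exI[of _ "\<lambda>_. 1"]) auto

lemma cspan_minimal:
  assumes "csubspace V" "S \<subseteq> V"
  shows "cspan S \<subseteq> V"
proof
  fix x assume "x \<in> cspan S"
  then obtain F a where "x = (\<Sum>u\<in>F. smul (a u) u)" "F \<subseteq> S"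
    unfolding cspan_def by blast
  with assms show "x \<in> V"
    by (auto intro!: csubspace_sum csubspace_smul)
qed

lemma cspan_mono: "S \<subseteq> T \<Longrightarrow> cspan S \<subseteq> cspan T"
  by (rule cspan_minimal[OF csubspace_cspan]) (auto intro: cspan_base)

definition linear_on :: "vec set \<Rightarrow> (vec \<Rightarrow> vec) \<Rightarrow> bool" where
  "linear_on V f \<longleftrightarrow>
     (\<forall>x\<in>V. \<forall>y\<in>V. f (x + y) = f x + f y) \<and> (\<forall>a. \<forall>x\<in>V. f (smul a x) = smul a (f x))"

lemma linear_onI:
  assumes "\<And>x y. x \<in> V \<Longrightarrow> y \<in> V \<Longrightarrow> f (x + y) = f x + f y"
    and "\<And>a x. x \<in> V \<Longrightarrow> f (smul a x) = smul a (f x)"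
  shows "linear_on V f"
  using assms by (simp add: linear_on_def)

lemma linear_on_add: "linear_on V f \<Longrightarrow> x \<in> V \<Longrightarrow> y \<in> V \<Longrightarrow> f (x + y) = f x + f y"
  and linear_on_smul: "linear_on V f \<Longrightarrow> x \<in> V \<Longrightarrow> f (smul a x) = smul a (f x)"
  by (simp_all add: linear_on_def)

lemma linear_on_sum:
  assumes V: "csubspace V" and f: "linear_on V f"
    and F: "finite F" "\<And>u. u \<in> F \<Longrightarrow> g u \<in> V"
  shows "f (sum g F) = (\<Sum>u\<in>F. f (g u))"
  using F
proof (induction F rule: finite_induct)
  case empty
  have "f (smul 0 0) = smul 0 (f 0)"
    using linear_on_smul[OF f csubspace_0[OF V]] .
  then show ?case by (simp only: smul_zero_left sum.empty)
next
  case (insert u F)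
  then have "sum g F \<in> V" by (auto intro: csubspace_sum[OF V])
  then have "f (g u + sum g F) = f (g u) + f (sum g F)"
    using insert.prems by (intro linear_on_add[OF f]) auto
  with insert show ?case by (simp add: sum.insert del: plus_fun_apply)
qed

lemma linear_on_cspan:
  assumes V: "csubspace V" and f: "linear_on V f" and "S \<subseteq> V"
    and W: "csubspace W" and img: "\<And>u. u \<in> S \<Longrightarrow> f u \<in> W"
    and x: "x \<in> cspan S"
  shows "f x \<in> W"
proof -
  obtain F a where x: "x = (\<Sum>u\<in>F. smul (a u) u)" "finite F" "F \<subseteq> S"
    using x unfolding cspan_def by blast
  with \<open>S \<subseteq> V\<close> have "f x = (\<Sum>u\<in>F. f (smul (a u) u))"
    by (auto intro!: linear_on_sum[OF V f] csubspace_smul[OF V])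
  also have "\<dots> = (\<Sum>u\<in>F. smul (a u) (f u))"
    using x \<open>S \<subseteq> V\<close> by (auto intro!: sum.cong linear_on_smul[OF f])
  also have "\<dots> \<in> W"
    using x img by (auto intro!: csubspace_sum[OF W] csubspace_smul[OF W])
  finally show ?thesis .
qed

section \<open>Lower central series and characteristic nilpotency\<close>

lemma br_in_carrier_L: "br L x y \<in> carrier_L L"
  by (simp add: br_def carrier_L_def)

lemma br_add_left: "br L (x + y) z = br L x z + br L y z"
  and br_add_right: "br L x (y + z) = br L x y + br L x z"
  by (auto simp: br_def fun_eq_iff algebra_simps sum.distrib)

lemma br_smul_left: "br L (smul a x) y = smul a (br L x y)"
  by (auto simp: br_def fun_eq_iff algebra_simps sum_distrib_left)

lemma linear_on_br_left: "linear_on V (\<lambda>x. br L x y)"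
  by (auto intro!: linear_onI simp: br_add_left br_smul_left)

lemma br_zero_left [simp]: "br L 0 y = 0"
  and br_zero_right [simp]: "br L x 0 = 0"
  by (auto simp: br_def fun_eq_iff)

lemma derivation_linear_on: "derivation L D \<Longrightarrow> linear_on (carrier_L L) D"
  by (simp add: derivation_def linear_on_def)

lemma derivation_in_carrier_L: "derivation L D \<Longrightarrow> x \<in> carrier_L L \<Longrightarrow> D x \<in> carrier_L L"
  and derivation_br: "derivation L D \<Longrightarrow> x \<in> carrier_L L \<Longrightarrow> y \<in> carrier_L L \<Longrightarrow>
      D (br L x y) = br L (D x) y + br L x (D y)"
  by (simp_all add: derivation_def)

lemma br_anticomm:
  assumes "lie_algebra L" "x \<in> carrier_L L" "y \<in> carrier_L L"
  shows "br L y x = - br L x y"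
proof -
  have "x + y \<in> carrier_L L"
    using assms by (simp add: csubspace_add csubspace_carrier_L)
  then have "0 = br L (x + y) (x + y)"
    using assms(1) by (simp add: lie_algebra_def)
  also have "\<dots> = br L x x + br L x y + br L y x + br L y y"
    by (simp add: br_add_left br_add_right add.assoc)
  also have "\<dots> = br L x y + br L y x"
    using assms by (simp add: lie_algebra_def)
  finally show ?thesis
    by (simp add: eq_neg_iff_add_eq_0 add.commute)
qed

lemma csubspace_C1: "csubspace (C1 L)"
  by (simp add: C1_def csubspace_cspan)

lemma C1_image_subset:
  assumes f: "linear_on (carrier_L L) f" and W: "csubspace W"
    and br: "\<And>x y. x \<in> carrier_L L \<Longrightarrow> y \<in> carrier_L L \<Longrightarrow> f (br L x y) \<in> W"
    and w: "w \<in> C1 L"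
  shows "f w \<in> W"
  by (rule linear_on_cspan[OF csubspace_carrier_L f _ W _ w[unfolded C1_def]])
    (use br br_in_carrier_L in blast)+

lemma csubspace_lcs: "csubspace (lcs L k)"
  by (cases k) (auto simp: csubspace_carrier_L csubspace_cspan)

lemma lcs_Suc_subset: "lcs L (Suc k) \<subseteq> lcs L k"
proof (induction k)
  case 0
  show ?case
    by (simp, rule cspan_minimal[OF csubspace_carrier_L]) (auto simp: br_in_carrier_L)
next
  case (Suc k)
  then show ?case
    by (simp only: lcs.simps, intro cspan_mono) blast
qed

lemma lcs_antimono: "i \<le> j \<Longrightarrow> lcs L j \<subseteq> lcs L i"
proof (induction j rule: dec_induct)
  case (step j)
  then show ?case using lcs_Suc_subset[of L j] by blast
qed simp

lemma lcs_subset_carrier_L: "lcs L k \<subseteq> carrier_L L"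
  using lcs_antimono[of 0 k L] by simp

lemma br_in_lcs_Suc: "x \<in> carrier_L L \<Longrightarrow> y \<in> lcs L k \<Longrightarrow> br L x y \<in> lcs L (Suc k)"
  by (simp, rule cspan_base) blast

lemma lcs_Suc_0: "lcs L (Suc 0) = C1 L"
  by (simp add: C1_def)

lemma lcs_hom:
  assumes f: "linear_on UNIV f" and carrier: "\<And>x. x \<in> carrier_L L \<Longrightarrow> f x \<in> carrier_L L'"
    and br: "\<And>x y. f (br L x y) = br L' (f x) (f y)"
  shows "v \<in> lcs L k \<Longrightarrow> f v \<in> lcs L' k"
proof (induction k arbitrary: v)
  case (Suc k)
  show ?case
  proof (rule linear_on_cspan[OF csubspace_UNIV f _ csubspace_lcs])
    show "v \<in> cspan {br L x y |x y. x \<in> carrier_L L \<and> y \<in> lcs L k}"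
      using Suc.prems by simp
  next
    fix u assume "u \<in> {br L x y |x y. x \<in> carrier_L L \<and> y \<in> lcs L k}"
    then obtain x y where "u = br L x y" "x \<in> carrier_L L" "y \<in> lcs L k"
      by blast
    then show "f u \<in> lcs L' (Suc k)"
      by (simp only: br carrier br_in_lcs_Suc Suc.IH)
  qed simp
qed (simp add: carrier)

lemma br_lcs_lcs:
  assumes L: "lie_algebra L"
  shows "x \<in> lcs L i \<Longrightarrow> y \<in> lcs L j \<Longrightarrow> br L x y \<in> lcs L (i + j + 1)"
proof (induction i arbitrary: j x y)
  case 0
  then show ?case using br_in_lcs_Suc[of x L y j] by simp
next
  case (Suc i)
  have y: "y \<in> carrier_L L"
    using Suc.prems lcs_subset_carrier_L by blast
  show ?case
  proof (rule linear_on_cspan[OF csubspace_UNIV linear_on_br_left _ csubspace_lcs])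
    show "x \<in> cspan {br L a b |a b. a \<in> carrier_L L \<and> b \<in> lcs L i}"
      using Suc.prems by simp
  next
    fix u assume "u \<in> {br L a b |a b. a \<in> carrier_L L \<and> b \<in> lcs L i}"
    then obtain a b where u: "u = br L a b" and a: "a \<in> carrier_L L" and b: "b \<in> lcs L i"
      by blast
    have b': "b \<in> carrier_L L"
      using b lcs_subset_carrier_L by blast
    have "br L y u + br L a (br L b y) + br L b (br L y a) = 0"
      using L a b' y u by (simp add: lie_algebra_def)
    then have "- br L y u = br L a (br L b y) + br L b (br L y a)"
      by (simp add: add.assoc minus_unique)
    then have jacobi: "br L u y = br L a (br L b y) + br L b (br L y a)"
      using br_anticomm[OF L y br_in_carrier_L] u by simp
    have "br L a (br L b y) \<in> lcs L (Suc i + j + 1)"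
      using br_in_lcs_Suc[OF a Suc.IH[OF b Suc.prems(2)]] by (simp del: lcs.simps)
    moreover have ya: "br L y a \<in> lcs L (Suc j)"
      using csubspace_neg[OF csubspace_lcs br_in_lcs_Suc[OF a Suc.prems(2)]]
      by (simp add: br_anticomm[OF L a y] del: lcs.simps)
    then have "br L b (br L y a) \<in> lcs L (Suc i + j + 1)"
      using Suc.IH[OF b ya] by (simp del: lcs.simps)
    ultimately show "br L u y \<in> lcs L (Suc i + j + 1)"
      unfolding jacobi by (rule csubspace_add[OF csubspace_lcs])
  qed auto
qed

lemma derivation_lcs_Suc:
  assumes L: "lie_algebra L" and D: "derivation L D" and DC1: "D ` carrier_L L \<subseteq> C1 L"
  shows "x \<in> lcs L k \<Longrightarrow> D x \<in> lcs L (Suc k)"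
proof (induction k arbitrary: x)
  case 0
  then show ?case using DC1 by (auto simp: lcs_Suc_0 simp del: lcs.simps(2))
next
  case (Suc k)
  show ?case
  proof (rule linear_on_cspan[OF csubspace_carrier_L derivation_linear_on[OF D] _ csubspace_lcs])
    show "x \<in> cspan {br L a b |a b. a \<in> carrier_L L \<and> b \<in> lcs L k}"
      using Suc.prems by simp
    show "{br L a b |a b. a \<in> carrier_L L \<and> b \<in> lcs L k} \<subseteq> carrier_L L"
      using br_in_carrier_L by blast
  next
    fix u assume "u \<in> {br L a b |a b. a \<in> carrier_L L \<and> b \<in> lcs L k}"
    then obtain a b where u: "u = br L a b" and a: "a \<in> carrier_L L" and b: "b \<in> lcs L k"
      by blast
    have "D a \<in> lcs L (Suc 0)"
      using DC1 a by (auto simp: lcs_Suc_0 simp del: lcs.simps)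
    from br_lcs_lcs[OF L this b] have Da_b: "br L (D a) b \<in> lcs L (Suc (Suc k))"
      by (simp del: lcs.simps)
    have a_Db: "br L a (D b) \<in> lcs L (Suc (Suc k))"
      using br_in_lcs_Suc[OF a Suc.IH[OF b]] .
    have "D u = br L (D a) b + br L a (D b)"
      using b lcs_subset_carrier_L unfolding u by (intro derivation_br[OF D a]) blast
    then show "D u \<in> lcs L (Suc (Suc k))"
      using csubspace_add[OF csubspace_lcs Da_b a_Db] by simp
  qed
qed

lemma zero_in_der_seq: "0 \<in> der_seq L k"
proof (induction k)
  case 0
  then show ?case by (simp add: carrier_L_def)
next
  case (Suc k)
  have "derivation L (\<lambda>_. 0)"
    by (simp add: derivation_def carrier_L_def)
  then have "\<exists>f y. (0::vec) = f y \<and> derivation L f \<and> y \<in> der_seq L k"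
    using Suc.IH by (intro exI[of _ "\<lambda>_. 0"] exI[of _ 0]) simp
  then show ?case by (simp only: der_seq.simps mem_Collect_eq)
qed

lemma der_seq_subset_lcs:
  assumes "lie_algebra L" and "\<And>D. derivation L D \<Longrightarrow> D ` carrier_L L \<subseteq> C1 L"
  shows "der_seq L k \<subseteq> lcs L k"
proof (induction k)
  case (Suc k)
  show ?case
  proof
    fix v assume "v \<in> der_seq L (Suc k)"
    then obtain D y where v: "v = D y" and D: "derivation L D" and y: "y \<in> der_seq L k"
      by auto
    show "v \<in> lcs L (Suc k)"
      unfolding v using Suc.IH y by (intro derivation_lcs_Suc[OF assms(1) D assms(2)[OF D]]) blast
  qed
qed simp

lemma char_nilpotent_if_derivations_into_C1:
  assumes L: "lie_algebra L" and N: "nilpotent_L L"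
    and DC1: "\<And>D. derivation L D \<Longrightarrow> D ` carrier_L L \<subseteq> C1 L"
  shows "char_nilpotent L"
proof -
  obtain k where k: "lcs L k = {0}"
    using N by (auto simp: nilpotent_L_def)
  have "der_seq L (Suc k) \<subseteq> lcs L k"
    using der_seq_subset_lcs[OF L DC1, of "Suc k"] lcs_Suc_subset[of L k] by (rule subset_trans)
  then have "der_seq L (Suc k) \<subseteq> {0}"
    using k by simp
  then have "der_seq L (Suc k) = {0}"
    using zero_in_der_seq[of L "Suc k"] by blast
  then show ?thesis
    using N unfolding char_nilpotent_def by (intro conjI exI[of _ "Suc k"]) auto
qed

section \<open>Coordinates in the product by generators\<close>

lemma sum_block:
  fixes h :: "nat \<Rightarrow> 'a::comm_monoid_add"
  assumes "a + m \<le> N"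
  shows "(\<Sum>j<N. if a \<le> j \<and> j < a + m then h j else 0) = (\<Sum>j<m. h (a + j))"
proof -
  have "(\<Sum>j<N. if a \<le> j \<and> j < a + m then h j else 0) = (\<Sum>j\<in>{a..<a + m}. h j)"
    using assms by (intro sum.mono_neutral_cong_right) auto
  also have "\<dots> = (\<Sum>j<m. h (a + j))"
    by (simp add: sum.atLeastLessThan_shift_0 atLeast0LessThan add.commute)
  finally show ?thesis .
qed

lemma double_sum_block:
  fixes g :: "nat \<Rightarrow> nat \<Rightarrow> 'a::comm_monoid_add"
  assumes "a + m \<le> N"
  shows "(\<Sum>i<N. \<Sum>j<N. if a \<le> i \<and> i < a + m \<and> a \<le> j \<and> j < a + m then g i j else 0)
    = (\<Sum>i<m. \<Sum>j<m. g (a + i) (a + j))"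
proof -
  have "(\<Sum>i<N. \<Sum>j<N. if a \<le> i \<and> i < a + m \<and> a \<le> j \<and> j < a + m then g i j else 0)
    = (\<Sum>i<N. if a \<le> i \<and> i < a + m then (\<Sum>j<N. if a \<le> j \<and> j < a + m then g i j else 0) else 0)"
    by (intro sum.cong) auto
  also have "\<dots> = (\<Sum>i<m. \<Sum>j<N. if a \<le> j \<and> j < a + m then g (a + i) j else 0)"
    by (rule sum_block[OF assms])
  also have "\<dots> = (\<Sum>i<m. \<Sum>j<m. g (a + i) (a + j))"
    by (simp add: sum_block[OF assms])
  finally show ?thesis .
qed

lemma double_sum_antisym_delta:
  fixes x y :: vec
  assumes "a < N" "b < N" "a \<noteq> b"
  shows "(\<Sum>i<N. \<Sum>j<N. x i * y j * (if i = a \<and> j = b then 1 else if j = a \<and> i = b then -1 else 0))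
       = x a * y b - x b * y a"
proof -
  have "x i * y j * (if i = a \<and> j = b then 1 else if j = a \<and> i = b then -1 else 0)
    = (if j = b then if i = a then x a * y b else 0 else 0)
      - (if j = a then if i = b then x b * y a else 0 else 0)" for i j
    using assms by auto
  then show ?thesis
    using assms by (simp add: sum_subtractf)
qed

definition proj1 :: "lie_sc \<Rightarrow> vec \<Rightarrow> vec" where
  "proj1 L v = (\<lambda>k. if k < ldim L then v k else 0)"

definition emb2 :: "lie_sc \<Rightarrow> lie_sc \<Rightarrow> vec \<Rightarrow> vec" where
  "emb2 L1 L2 b = (\<lambda>k. if ldim L1 \<le> k \<and> k < ldim L1 + ldim L2 then b (k - ldim L1) else 0)"

definition proj3 :: "lie_sc \<Rightarrow> lie_sc \<Rightarrow> nat \<Rightarrow> nat \<Rightarrow> vec \<Rightarrow> vec" where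
  "proj3 L1 L2 n1 n2 v = (\<lambda>t. if t < n1 * n2 then v (ldim L1 + ldim L2 + t) else 0)"

definition emb3 :: "lie_sc \<Rightarrow> lie_sc \<Rightarrow> nat \<Rightarrow> nat \<Rightarrow> vec \<Rightarrow> vec" where
  "emb3 L1 L2 n1 n2 c = (\<lambda>k. if ldim L1 + ldim L2 \<le> k \<and> k < ldim L1 + ldim L2 + n1 * n2
      then c (k - ldim L1 - ldim L2) else 0)"

text \<open>The \<open>\<frak>g\<^sub>3\<close>-coordinates of \<open>[a, b]\<close> for \<open>a \<in> \<frak>g\<^sub>1\<close>, \<open>b \<in> \<frak>g\<^sub>2\<close>:
  the coefficient of \<open>Z\<^sub>t\<close>, \<open>t = i n\<^sub>2 + j\<close>, is \<open>a\<^sub>i b\<^sub>j\<close>.\<close>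
definition gen_tensor :: "nat \<Rightarrow> nat \<Rightarrow> vec \<Rightarrow> vec \<Rightarrow> vec" where
  "gen_tensor n1 n2 a b = (\<lambda>t. if t < n1 * n2 then a (t div n2) * b (t mod n2) else 0)"

lemma ldim_prod_gen: "ldim (prod_gen L1 n1 L2 n2) = ldim L1 + ldim L2 + n1 * n2"
  by (simp add: prod_gen_def Let_def)

lemma carrier_prod_gen_iff:
  "v \<in> carrier_L (prod_gen L1 n1 L2 n2) \<longleftrightarrow> (\<forall>i. ldim L1 + ldim L2 + n1 * n2 \<le> i \<longrightarrow> v i = 0)"
  by (simp add: carrier_L_def ldim_prod_gen)

lemma prod_gen_eqI:
  assumes "v \<in> carrier_L (prod_gen L1 n1 L2 n2)" "w \<in> carrier_L (prod_gen L1 n1 L2 n2)"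
    and "proj1 L1 v = proj1 L1 w" "proj2 L1 L2 v = proj2 L1 L2 w"
    and "proj3 L1 L2 n1 n2 v = proj3 L1 L2 n1 n2 w"
  shows "v = w"
proof
  fix k
  consider "k < ldim L1" | "ldim L1 \<le> k" "k < ldim L1 + ldim L2"
    | "ldim L1 + ldim L2 \<le> k" "k < ldim L1 + ldim L2 + n1 * n2"
    | "ldim L1 + ldim L2 + n1 * n2 \<le> k"
    by linarith
  then show "v k = w k"
  proof cases
    case 1
    then show ?thesis using fun_cong[OF assms(3), of k] by (simp add: proj1_def)
  next
    case 2
    then have "ldim L1 + (k - ldim L1) = k" "k - ldim L1 < ldim L2" by auto
    then show ?thesis using fun_cong[OF assms(4), of "k - ldim L1"] by (simp add: proj2_def)
  next
    case 3
    then have "ldim L1 + ldim L2 + (k - ldim L1 - ldim L2) = k" "k - ldim L1 - ldim L2 < n1 * n2"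
      by auto
    then show ?thesis
      using fun_cong[OF assms(5), of "k - ldim L1 - ldim L2"] by (simp add: proj3_def)
  next
    case 4
    then show ?thesis using assms(1,2) by (simp add: carrier_prod_gen_iff)
  qed
qed

lemma prod_gen_decomp:
  assumes "v \<in> carrier_L (prod_gen L1 n1 L2 n2)"
  shows "v = proj1 L1 v + emb2 L1 L2 (proj2 L1 L2 v) + emb3 L1 L2 n1 n2 (proj3 L1 L2 n1 n2 v)"
  using assms by (auto simp: fun_eq_iff proj1_def emb2_def proj2_def emb3_def proj3_def
      carrier_prod_gen_iff)

lemma proj1_add [simp]: "proj1 L (x + y) = proj1 L x + proj1 L y"
  and proj2_add [simp]: "proj2 L1 L2 (x + y) = proj2 L1 L2 x + proj2 L1 L2 y"
  and proj3_add [simp]: "proj3 L1 L2 n1 n2 (x + y) = proj3 L1 L2 n1 n2 x + proj3 L1 L2 n1 n2 y"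
  and emb2_add [simp]: "emb2 L1 L2 (x + y) = emb2 L1 L2 x + emb2 L1 L2 y"
  and proj1_smul [simp]: "proj1 L (smul a x) = smul a (proj1 L x)"
  and proj2_smul [simp]: "proj2 L1 L2 (smul a x) = smul a (proj2 L1 L2 x)"
  and proj3_smul [simp]: "proj3 L1 L2 n1 n2 (smul a x) = smul a (proj3 L1 L2 n1 n2 x)"
  and emb2_smul [simp]: "emb2 L1 L2 (smul a x) = smul a (emb2 L1 L2 x)"
  by (simp_all add: proj1_def proj2_def proj3_def emb2_def fun_eq_iff)

lemma linear_on_proj1: "linear_on V (proj1 L)"
  and linear_on_proj2: "linear_on V (proj2 L1 L2)"
  and linear_on_proj3: "linear_on V (proj3 L1 L2 n1 n2)"
  and linear_on_emb2: "linear_on V (emb2 L1 L2)"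
  by (simp_all add: linear_onI)

lemma proj1_zero [simp]: "proj1 L 0 = 0"
  and proj2_zero [simp]: "proj2 L1 L2 0 = 0"
  and proj3_zero [simp]: "proj3 L1 L2 n1 n2 0 = 0"
  by (simp_all add: proj1_def proj2_def proj3_def fun_eq_iff)

lemma proj1_in_carrier_L: "proj1 L v \<in> carrier_L L"
  and proj2_in_carrier_L: "proj2 L1 L2 v \<in> carrier_L L2"
  and emb2_in_carrier_L: "emb2 L1 L2 b \<in> carrier_L (prod_gen L1 n1 L2 n2)"
  and emb3_in_carrier_L: "emb3 L1 L2 n1 n2 c \<in> carrier_L (prod_gen L1 n1 L2 n2)"
  and carrier_L_first_factor: "a \<in> carrier_L L1 \<Longrightarrow> a \<in> carrier_L (prod_gen L1 n1 L2 n2)"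
  by (auto simp: carrier_L_def ldim_prod_gen proj1_def proj2_def emb2_def emb3_def)

lemma proj1_id: "v \<in> carrier_L L \<Longrightarrow> proj1 L v = v"
  by (auto simp: proj1_def carrier_L_def fun_eq_iff)

lemma proj2_first_factor: "a \<in> carrier_L L1 \<Longrightarrow> proj2 L1 L2 a = 0"
  and proj3_first_factor: "a \<in> carrier_L L1 \<Longrightarrow> proj3 L1 L2 n1 n2 a = 0"
  by (auto simp: proj2_def proj3_def carrier_L_def fun_eq_iff)

lemma proj1_emb2 [simp]: "proj1 L1 (emb2 L1 L2 b) = 0"
  and proj2_emb2 [simp]: "proj2 L1 L2 (emb2 L1 L2 b) = proj1 L2 b"
  and proj3_emb2 [simp]: "proj3 L1 L2 n1 n2 (emb2 L1 L2 b) = 0"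
  and proj1_emb3 [simp]: "proj1 L1 (emb3 L1 L2 n1 n2 c) = 0"
  and proj2_emb3 [simp]: "proj2 L1 L2 (emb3 L1 L2 n1 n2 c) = 0"
  and proj3_emb3 [simp]: "proj3 L1 L2 n1 n2 (emb3 L1 L2 n1 n2 c) = (\<lambda>t. if t < n1 * n2 then c t else 0)"
  by (auto simp: proj1_def proj2_def proj3_def emb2_def emb3_def fun_eq_iff)

lemma proj1_br_prod_gen:
  "proj1 L1 (br (prod_gen L1 n1 L2 n2) x y) = br L1 (proj1 L1 x) (proj1 L1 y)"
proof
  fix k
  let ?N = "ldim L1 + ldim L2 + n1 * n2"
  show "proj1 L1 (br (prod_gen L1 n1 L2 n2) x y) k = br L1 (proj1 L1 x) (proj1 L1 y) k"
  proof (cases "k < ldim L1")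
    case True
    then have "x i * y j * lsc (prod_gen L1 n1 L2 n2) i j k
      = (if 0 \<le> i \<and> i < 0 + ldim L1 \<and> 0 \<le> j \<and> j < 0 + ldim L1 then x i * y j * lsc L1 i j k else 0)"
      for i j by (auto simp: prod_gen_def Let_def)
    then have "br (prod_gen L1 n1 L2 n2) x y k = (\<Sum>i<ldim L1. \<Sum>j<ldim L1. x i * y j * lsc L1 i j k)"
      using True double_sum_block[of 0 "ldim L1" ?N] by (simp add: br_def ldim_prod_gen)
    with True show ?thesis by (simp add: br_def proj1_def)
  qed (simp add: proj1_def br_def)
qed

lemma proj2_br_prod_gen:
  "proj2 L1 L2 (br (prod_gen L1 n1 L2 n2) x y) = br L2 (proj2 L1 L2 x) (proj2 L1 L2 y)"
proof
  fix k
  let ?N = "ldim L1 + ldim L2 + n1 * n2"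
  let ?m1 = "ldim L1"
  show "proj2 L1 L2 (br (prod_gen L1 n1 L2 n2) x y) k = br L2 (proj2 L1 L2 x) (proj2 L1 L2 y) k"
  proof (cases "k < ldim L2")
    case True
    then have "x i * y j * lsc (prod_gen L1 n1 L2 n2) i j (?m1 + k)
      = (if ?m1 \<le> i \<and> i < ?m1 + ldim L2 \<and> ?m1 \<le> j \<and> j < ?m1 + ldim L2
         then x i * y j * lsc L2 (i - ?m1) (j - ?m1) k else 0)"
      for i j by (auto simp: prod_gen_def Let_def)
    then have "br (prod_gen L1 n1 L2 n2) x y (?m1 + k)
      = (\<Sum>i<ldim L2. \<Sum>j<ldim L2. x (?m1 + i) * y (?m1 + j) * lsc L2 i j k)"
      using True double_sum_block[of ?m1 "ldim L2" ?N "\<lambda>i j. x i * y j * lsc L2 (i - ?m1) (j - ?m1) k"]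
      by (simp add: br_def ldim_prod_gen)
    with True show ?thesis by (simp add: br_def proj2_def)
  qed (simp add: proj2_def br_def)
qed

lemma lsc_prod_gen_central:
  assumes t: "t < n1 * n2"
  shows "lsc (prod_gen L1 n1 L2 n2) i j (ldim L1 + ldim L2 + t) =
    (if i = t div n2 \<and> j = ldim L1 + t mod n2 then 1
     else if j = t div n2 \<and> i = ldim L1 + t mod n2 then -1 else 0)"
proof -
  let ?m1 = "ldim L1" and ?m2 = "ldim L2"
  have Z: "(i < n1 \<and> ?m1 \<le> j \<and> j < ?m1 + n2 \<and> ?m1 + ?m2 + t = ?m1 + ?m2 + i * n2 + (j - ?m1))
      \<longleftrightarrow> i = t div n2 \<and> j = ?m1 + t mod n2" for i j
  proof
    assume h: "i < n1 \<and> ?m1 \<le> j \<and> j < ?m1 + n2 \<and> ?m1 + ?m2 + t = ?m1 + ?m2 + i * n2 + (j - ?m1)"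
    define r where "r = j - ?m1"
    have j: "j = ?m1 + r" and "r < n2" "t = i * n2 + r"
      using h by (auto simp: r_def)
    then have "t div n2 = i" "t mod n2 = r"
      by simp_all
    with j show "i = t div n2 \<and> j = ?m1 + t mod n2"
      by simp
  next
    have "t div n2 < n1" "t mod n2 < n2"
      using t by (simp_all add: less_mult_imp_div_less) (cases n2, auto)
    then show "i = t div n2 \<and> j = ?m1 + t mod n2 \<Longrightarrow>
      i < n1 \<and> ?m1 \<le> j \<and> j < ?m1 + n2 \<and> ?m1 + ?m2 + t = ?m1 + ?m2 + i * n2 + (j - ?m1)"
      by auto
  qed
  have "lsc (prod_gen L1 n1 L2 n2) i j (?m1 + ?m2 + t) =
    (if i < n1 \<and> ?m1 \<le> j \<and> j < ?m1 + n2 \<and> ?m1 + ?m2 + t = ?m1 + ?m2 + i * n2 + (j - ?m1) then 1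
     else if j < n1 \<and> ?m1 \<le> i \<and> i < ?m1 + n2 \<and> ?m1 + ?m2 + t = ?m1 + ?m2 + j * n2 + (i - ?m1) then -1
     else 0)"
    by (simp add: prod_gen_def Let_def)
  then show ?thesis
    by (simp only: Z)
qed

lemma proj3_br_prod_gen:
  assumes n1: "n1 \<le> ldim L1" and n2: "n2 \<le> ldim L2"
  shows "proj3 L1 L2 n1 n2 (br (prod_gen L1 n1 L2 n2) x y)
     = gen_tensor n1 n2 (proj1 L1 x) (proj2 L1 L2 y) - gen_tensor n1 n2 (proj1 L1 y) (proj2 L1 L2 x)"
proof
  fix t
  let ?P = "prod_gen L1 n1 L2 n2"
  show "proj3 L1 L2 n1 n2 (br ?P x y) t
    = (gen_tensor n1 n2 (proj1 L1 x) (proj2 L1 L2 y) - gen_tensor n1 n2 (proj1 L1 y) (proj2 L1 L2 x)) t"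
  proof (cases "t < n1 * n2")
    case True
    define a b where "a = t div n2" and "b = ldim L1 + t mod n2"
    have "a < n1" "t mod n2 < n2"
      using True by (simp_all add: a_def less_mult_imp_div_less) (cases n2, auto)
    then have "a < ldim ?P" "b < ldim ?P" "a \<noteq> b"
      using n1 n2 by (auto simp: ldim_prod_gen b_def)
    moreover have "lsc ?P i j (ldim L1 + ldim L2 + t)
      = (if i = a \<and> j = b then 1 else if j = a \<and> i = b then -1 else 0)" for i j
      unfolding a_def b_def by (rule lsc_prod_gen_central[OF True])
    ultimately have "br ?P x y (ldim L1 + ldim L2 + t) = x a * y b - x b * y a"
      using True by (simp add: br_def ldim_prod_gen double_sum_antisym_delta)
    with True \<open>a < n1\<close> \<open>t mod n2 < n2\<close> n1 n2 show ?thesis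
      by (simp add: proj3_def gen_tensor_def proj1_def proj2_def a_def b_def)
  qed (simp add: proj3_def gen_tensor_def)
qed

lemma br_proj1: "br L (proj1 L x) (proj1 L y) = br L x y"
  by (auto simp: br_def proj1_def fun_eq_iff intro!: sum.cong)

lemma br_in_C1: "br L x y \<in> C1 L"
proof -
  have "br L (proj1 L x) (proj1 L y) \<in> C1 L"
    unfolding C1_def by (rule cspan_base) (use proj1_in_carrier_L in blast)
  then show ?thesis by (simp add: br_proj1)
qed

lemma C1_coord_below_generators: "adapted L n \<Longrightarrow> v \<in> C1 L \<Longrightarrow> i < n \<Longrightarrow> v i = 0"
proof -
  assume "adapted L n" "v \<in> C1 L" "i < n"
  moreover have "cspan {unitv k | k. n \<le> k \<and> k < ldim L} \<subseteq> {v. \<forall>i<n. v i = 0}"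
    by (rule cspan_minimal) (auto simp: csubspace_def unitv_def)
  ultimately show ?thesis by (auto simp: adapted_def)
qed

lemma gen_tensor_zero_left [simp]: "gen_tensor n1 n2 0 b = 0"
  and gen_tensor_zero_right [simp]: "gen_tensor n1 n2 a 0 = 0"
  by (simp_all add: gen_tensor_def fun_eq_iff)

lemma gen_tensor_eq_0_left: "(\<And>i. i < n1 \<Longrightarrow> a i = 0) \<Longrightarrow> gen_tensor n1 n2 a b = 0"
  by (auto simp: gen_tensor_def fun_eq_iff less_mult_imp_div_less)

lemma gen_tensor_eq_0_right: "(\<And>j. j < n2 \<Longrightarrow> b j = 0) \<Longrightarrow> gen_tensor n1 n2 a b = 0"
proof (rule ext)
  fix t
  assume "\<And>j. j < n2 \<Longrightarrow> b j = 0"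
  moreover have "t < n1 * n2 \<Longrightarrow> t mod n2 < n2"
    by (cases n2) auto
  ultimately show "gen_tensor n1 n2 a b t = 0 t"
    by (simp add: gen_tensor_def)
qed

lemma br_prod_gen_first_factor:
  assumes "a \<in> carrier_L L1" "b \<in> carrier_L L1" "n1 \<le> ldim L1" "n2 \<le> ldim L2"
  shows "br (prod_gen L1 n1 L2 n2) a b = br L1 a b"
  by (rule prod_gen_eqI[OF br_in_carrier_L carrier_L_first_factor[OF br_in_carrier_L]])
    (use assms in \<open>simp_all add: proj1_br_prod_gen proj2_br_prod_gen proj3_br_prod_gen proj1_id
        proj2_first_factor proj3_first_factor br_in_carrier_L\<close>)

lemma br_prod_gen_emb2:
  assumes "n1 \<le> ldim L1" "n2 \<le> ldim L2"
  shows "br (prod_gen L1 n1 L2 n2) (emb2 L1 L2 a) (emb2 L1 L2 b) = emb2 L1 L2 (br L2 a b)"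
  by (rule prod_gen_eqI[OF br_in_carrier_L emb2_in_carrier_L])
    (use assms in \<open>simp_all add: proj1_br_prod_gen proj2_br_prod_gen proj3_br_prod_gen br_proj1
        proj1_id br_in_carrier_L\<close>)

lemma emb3_unitv:
  assumes n1: "n1 \<le> ldim L1" and n2: "n2 \<le> ldim L2" and t: "t < n1 * n2"
  shows "emb3 L1 L2 n1 n2 (unitv t)
    = br (prod_gen L1 n1 L2 n2) (unitv (t div n2)) (unitv (ldim L1 + t mod n2))"
proof (rule prod_gen_eqI[OF emb3_in_carrier_L br_in_carrier_L])
  have i: "t div n2 < n1"
    using t by (simp add: less_mult_imp_div_less)
  have j: "t mod n2 < n2"
    using t by (cases n2) auto
  have "gen_tensor n1 n2 (unitv (t div n2)) (unitv (t mod n2)) = (\<lambda>s. if s < n1 * n2 then unitv t s else 0)"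
  proof
    fix s
    have "s div n2 = t div n2 \<and> s mod n2 = t mod n2 \<longleftrightarrow> s = t"
      by (metis div_mult_mod_eq)
    then show "gen_tensor n1 n2 (unitv (t div n2)) (unitv (t mod n2)) s
      = (if s < n1 * n2 then unitv t s else 0)"
      by (auto simp: gen_tensor_def unitv_def)
  qed
  moreover have "proj1 L1 (unitv (t div n2)) = unitv (t div n2)"
    "proj2 L1 L2 (unitv (ldim L1 + t mod n2)) = unitv (t mod n2)"
    "proj1 L1 (unitv (ldim L1 + t mod n2)) = 0" "proj2 L1 L2 (unitv (t div n2)) = 0"
    using i j n1 n2 by (auto simp: proj1_def proj2_def unitv_def fun_eq_iff)
  ultimately show
    "proj1 L1 (emb3 L1 L2 n1 n2 (unitv t))
      = proj1 L1 (br (prod_gen L1 n1 L2 n2) (unitv (t div n2)) (unitv (ldim L1 + t mod n2)))"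
    "proj2 L1 L2 (emb3 L1 L2 n1 n2 (unitv t))
      = proj2 L1 L2 (br (prod_gen L1 n1 L2 n2) (unitv (t div n2)) (unitv (ldim L1 + t mod n2)))"
    "proj3 L1 L2 n1 n2 (emb3 L1 L2 n1 n2 (unitv t))
      = proj3 L1 L2 n1 n2 (br (prod_gen L1 n1 L2 n2) (unitv (t div n2)) (unitv (ldim L1 + t mod n2)))"
    using n1 n2 by (simp_all add: proj1_br_prod_gen proj2_br_prod_gen proj3_br_prod_gen)
qed

lemma emb3_eq_sum_unitv: "emb3 L1 L2 n1 n2 c = (\<Sum>t<n1 * n2. smul (c t) (emb3 L1 L2 n1 n2 (unitv t)))"
proof
  fix k
  have "(\<Sum>t<n1 * n2. smul (c t) (emb3 L1 L2 n1 n2 (unitv t))) k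
    = (\<Sum>t<n1 * n2. if k - ldim L1 - ldim L2 = t then emb3 L1 L2 n1 n2 c k else 0)"
    unfolding sum_fun_apply by (intro sum.cong) (auto simp: emb3_def unitv_def)
  also have "\<dots> = emb3 L1 L2 n1 n2 c k"
    by (auto simp: emb3_def)
  finally show "emb3 L1 L2 n1 n2 c k = (\<Sum>t<n1 * n2. smul (c t) (emb3 L1 L2 n1 n2 (unitv t))) k" ..
qed

lemma emb3_in_C1:
  assumes "n1 \<le> ldim L1" "n2 \<le> ldim L2"
  shows "emb3 L1 L2 n1 n2 c \<in> C1 (prod_gen L1 n1 L2 n2)"
  unfolding emb3_eq_sum_unitv[of L1 L2 n1 n2 c]
  using assms by (auto simp: emb3_unitv br_in_C1 intro!: csubspace_sum csubspace_smul csubspace_C1)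

section \<open>The product is a nilpotent Lie algebra\<close>

lemma proj3_br_C1_prod_gen:
  assumes a1: "adapted L1 n1" and a2: "adapted L2 n2"
    and y1: "proj1 L1 y \<in> C1 L1" and y2: "proj2 L1 L2 y \<in> C1 L2"
  shows "proj3 L1 L2 n1 n2 (br (prod_gen L1 n1 L2 n2) x y) = 0"
proof -
  have "gen_tensor n1 n2 (proj1 L1 x) (proj2 L1 L2 y) = 0"
    by (rule gen_tensor_eq_0_right) (rule C1_coord_below_generators[OF a2 y2])
  moreover have "gen_tensor n1 n2 (proj1 L1 y) (proj2 L1 L2 x) = 0"
    by (rule gen_tensor_eq_0_left) (rule C1_coord_below_generators[OF a1 y1])
  ultimately show ?thesis
    using a1 a2 by (simp add: proj3_br_prod_gen adapted_def)
qed

lemma lie_algebra_prod_gen: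
  assumes l1: "lie_algebra L1" and l2: "lie_algebra L2"
    and a1: "adapted L1 n1" and a2: "adapted L2 n2"
  shows "lie_algebra (prod_gen L1 n1 L2 n2)"
proof -
  let ?P = "prod_gen L1 n1 L2 n2"
  have n: "n1 \<le> ldim L1" "n2 \<le> ldim L2"
    using a1 a2 by (simp_all add: adapted_def)
  have zero: "0 \<in> carrier_L ?P"
    by (simp add: carrier_L_def)
  have proj3_br_br: "proj3 L1 L2 n1 n2 (br ?P x (br ?P y z)) = 0" for x y z
    using a1 a2 by (rule proj3_br_C1_prod_gen) (simp_all add: proj1_br_prod_gen proj2_br_prod_gen br_in_C1)
  have "br ?P x x = 0" for x
    by (rule prod_gen_eqI[OF br_in_carrier_L zero])
      (use l1 l2 n in \<open>simp_all add: proj1_br_prod_gen proj2_br_prod_gen proj3_br_prod_gen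
          proj1_in_carrier_L proj2_in_carrier_L lie_algebra_def\<close>)
  moreover have "br ?P x (br ?P y z) + br ?P y (br ?P z x) + br ?P z (br ?P x y) = 0" for x y z
    by (rule prod_gen_eqI[OF _ zero])
      (use l1 l2 proj3_br_br in \<open>simp_all add: csubspace_add[OF csubspace_carrier_L] br_in_carrier_L
          proj1_br_prod_gen proj2_br_prod_gen proj1_in_carrier_L proj2_in_carrier_L lie_algebra_def\<close>)
  ultimately show ?thesis
    by (simp add: lie_algebra_def)
qed

lemma proj1_lcs_prod_gen: "v \<in> lcs (prod_gen L1 n1 L2 n2) k \<Longrightarrow> proj1 L1 v \<in> lcs L1 k"
  by (rule lcs_hom) (simp_all add: linear_on_proj1 proj1_in_carrier_L proj1_br_prod_gen)

lemma proj2_lcs_prod_gen: "v \<in> lcs (prod_gen L1 n1 L2 n2) k \<Longrightarrow> proj2 L1 L2 v \<in> lcs L2 k"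
  by (rule lcs_hom) (simp_all add: linear_on_proj2 proj2_in_carrier_L proj2_br_prod_gen)

lemma proj3_lcs_prod_gen:
  assumes a1: "adapted L1 n1" and a2: "adapted L2 n2"
    and v: "v \<in> lcs (prod_gen L1 n1 L2 n2) (Suc (Suc k))"
  shows "proj3 L1 L2 n1 n2 v = 0"
proof -
  let ?P = "prod_gen L1 n1 L2 n2"
  have "proj3 L1 L2 n1 n2 v \<in> {0}"
  proof (rule linear_on_cspan[OF csubspace_UNIV linear_on_proj3 _ csubspace_zero])
    show "v \<in> cspan {br ?P x y |x y. x \<in> carrier_L ?P \<and> y \<in> lcs ?P (Suc k)}"
      using v by (simp only: lcs.simps(2))
  next
    fix u assume "u \<in> {br ?P x y |x y. x \<in> carrier_L ?P \<and> y \<in> lcs ?P (Suc k)}"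
    then obtain x y where u: "u = br ?P x y" and y: "y \<in> lcs ?P (Suc k)"
      by blast
    have "y \<in> lcs ?P (Suc 0)"
      using y lcs_antimono[of "Suc 0" "Suc k"] by blast
    then have "proj1 L1 y \<in> C1 L1" "proj2 L1 L2 y \<in> C1 L2"
      using proj1_lcs_prod_gen proj2_lcs_prod_gen lcs_Suc_0 by blast+
    then show "proj3 L1 L2 n1 n2 u \<in> {0}"
      unfolding u using proj3_br_C1_prod_gen[OF a1 a2] by blast
  qed simp
  then show ?thesis by simp
qed

lemma nilpotent_prod_gen:
  assumes a1: "adapted L1 n1" and a2: "adapted L2 n2"
    and N1: "nilpotent_L L1" and N2: "nilpotent_L L2"
  shows "nilpotent_L (prod_gen L1 n1 L2 n2)"
proof -
  let ?P = "prod_gen L1 n1 L2 n2"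
  obtain k1 k2 where k1: "lcs L1 k1 = {0}" and k2: "lcs L2 k2 = {0}"
    using N1 N2 by (auto simp: nilpotent_L_def)
  let ?k = "Suc (Suc (k1 + k2))"
  have "v = 0" if v: "v \<in> lcs ?P ?k" for v
  proof (rule prod_gen_eqI[of _ L1 n1 L2 n2])
    show "v \<in> carrier_L ?P"
      using v lcs_subset_carrier_L by blast
    show "0 \<in> carrier_L ?P"
      by (simp add: carrier_L_def)
    have "proj1 L1 v \<in> lcs L1 ?k" "proj2 L1 L2 v \<in> lcs L2 ?k"
      using v by (rule proj1_lcs_prod_gen, rule proj2_lcs_prod_gen)
    moreover have "lcs L1 ?k \<subseteq> lcs L1 k1" "lcs L2 ?k \<subseteq> lcs L2 k2"
      by (simp_all only: lcs_antimono le_add1 le_add2 le_SucI)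
    ultimately have "proj1 L1 v = 0" "proj2 L1 L2 v = 0"
      using k1 k2 by blast+
    then show "proj1 L1 v = proj1 L1 0" "proj2 L1 L2 v = proj2 L1 L2 0"
      by simp_all
    show "proj3 L1 L2 n1 n2 v = proj3 L1 L2 n1 n2 0"
      using proj3_lcs_prod_gen[OF a1 a2 v] by simp
  qed
  then have "lcs ?P ?k = {0}"
    using csubspace_0[OF csubspace_lcs] by blast
  then show ?thesis
    unfolding nilpotent_L_def by blast
qed

section \<open>Exchanging the factors\<close>

text \<open>\<open>\<frak>g\<^sub>3\<close>-coordinates of \<open>\<frak>g\<^sub>2 \<times> \<frak>g\<^sub>1\<close> are indexed by \<open>j n\<^sub>1 + i\<close>, those of
  \<open>\<frak>g\<^sub>1 \<times> \<frak>g\<^sub>2\<close> by \<open>i n\<^sub>2 + j\<close>.\<close>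
definition transpose_gen :: "nat \<Rightarrow> nat \<Rightarrow> vec \<Rightarrow> vec" where
  "transpose_gen n1 n2 c = (\<lambda>t. if t < n1 * n2 then c ((t mod n2) * n1 + t div n2) else 0)"

text \<open>The isomorphism \<open>\<frak>g\<^sub>2 \<times> \<frak>g\<^sub>1 \<rightarrow> \<frak>g\<^sub>1 \<times> \<frak>g\<^sub>2\<close>; the central coordinates change sign
  because \<open>[X'\<^sub>j, X\<^sub>i] = - [X\<^sub>i, X'\<^sub>j]\<close>.\<close>
definition swap_prod :: "lie_sc \<Rightarrow> nat \<Rightarrow> lie_sc \<Rightarrow> nat \<Rightarrow> vec \<Rightarrow> vec" where
  "swap_prod L1 n1 L2 n2 v = (\<lambda>k. if k < ldim L1 then v (ldim L2 + k)
     else if k < ldim L1 + ldim L2 then v (k - ldim L1)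
     else if k < ldim L1 + ldim L2 + n1 * n2
       then - v (ldim L2 + ldim L1 + (((k - ldim L1 - ldim L2) mod n2) * n1 + (k - ldim L1 - ldim L2) div n2))
     else 0)"

lemma transpose_index_less:
  fixes t n1 n2 :: nat
  assumes "t < n1 * n2"
  shows "(t mod n2) * n1 + t div n2 < n2 * n1"
proof -
  have "t div n2 < n1"
    using assms by (simp add: less_mult_imp_div_less)
  moreover have "t mod n2 + 1 \<le> n2"
    using assms by (cases n2) auto
  then have "(t mod n2 + 1) * n1 \<le> n2 * n1"
    by (rule mult_right_mono) simp
  ultimately show ?thesis
    by (simp add: algebra_simps)
qed

lemma transpose_index_div_mod:
  fixes t n1 n2 :: nat
  assumes "t < n1 * n2"
  shows "((t mod n2) * n1 + t div n2) div n1 = t mod n2"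
    and "((t mod n2) * n1 + t div n2) mod n1 = t div n2"
proof -
  have "t div n2 < n1"
    using assms by (simp add: less_mult_imp_div_less)
  then show "((t mod n2) * n1 + t div n2) div n1 = t mod n2"
    and "((t mod n2) * n1 + t div n2) mod n1 = t div n2"
    by simp_all
qed

lemma transpose_gen_tensor: "transpose_gen n1 n2 (gen_tensor n2 n1 a b) = gen_tensor n1 n2 b a"
proof
  fix t
  show "transpose_gen n1 n2 (gen_tensor n2 n1 a b) t = gen_tensor n1 n2 b a t"
    using transpose_index_less[of t n1 n2] transpose_index_div_mod[of t n1 n2]
    by (simp add: transpose_gen_def gen_tensor_def mult.commute)
qed

lemma transpose_gen_diff: "transpose_gen n1 n2 (c - d) = transpose_gen n1 n2 c - transpose_gen n1 n2 d"
  and transpose_gen_uminus: "transpose_gen n1 n2 (- c) = - transpose_gen n1 n2 c"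
  by (auto simp: transpose_gen_def fun_eq_iff)

lemma transpose_gen_transpose_gen:
  assumes "\<And>s. n2 * n1 \<le> s \<Longrightarrow> c s = 0"
  shows "transpose_gen n2 n1 (transpose_gen n1 n2 c) = c"
proof
  fix s
  show "transpose_gen n2 n1 (transpose_gen n1 n2 c) s = c s"
  proof (cases "s < n2 * n1")
    case True
    define u where "u = (s mod n1) * n2 + s div n1"
    have "u < n1 * n2" "u mod n2 = s div n1" "u div n2 = s mod n1"
      using transpose_index_less[OF True] transpose_index_div_mod[OF True] by (simp_all add: u_def)
    moreover have "(s div n1) * n1 + s mod n1 = s"
      by simp
    ultimately show ?thesis
      using True by (simp add: transpose_gen_def u_def[symmetric])
  qed (simp add: transpose_gen_def assms)
qed

lemma swap_prod_in_carrier_L: "swap_prod L1 n1 L2 n2 v \<in> carrier_L (prod_gen L1 n1 L2 n2)"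
  by (simp add: carrier_prod_gen_iff swap_prod_def)

lemma proj1_swap_prod [simp]: "proj1 L1 (swap_prod L1 n1 L2 n2 v) = proj2 L2 L1 v"
  and proj2_swap_prod [simp]: "proj2 L1 L2 (swap_prod L1 n1 L2 n2 v) = proj1 L2 v"
  by (auto simp: fun_eq_iff proj1_def proj2_def swap_prod_def)

lemma proj3_swap_prod [simp]:
  "proj3 L1 L2 n1 n2 (swap_prod L1 n1 L2 n2 v) = - transpose_gen n1 n2 (proj3 L2 L1 n2 n1 v)"
proof
  fix t
  show "proj3 L1 L2 n1 n2 (swap_prod L1 n1 L2 n2 v) t = (- transpose_gen n1 n2 (proj3 L2 L1 n2 n1 v)) t"
    using transpose_index_less[of t n1 n2] by (simp add: proj3_def transpose_gen_def swap_prod_def)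
qed

lemma swap_prod_add [simp]: "swap_prod L1 n1 L2 n2 (x + y) = swap_prod L1 n1 L2 n2 x + swap_prod L1 n1 L2 n2 y"
  and swap_prod_smul [simp]: "swap_prod L1 n1 L2 n2 (smul a x) = smul a (swap_prod L1 n1 L2 n2 x)"
  by (auto simp: fun_eq_iff swap_prod_def)

lemma linear_on_swap_prod: "linear_on V (swap_prod L1 n1 L2 n2)"
  by (simp add: linear_onI)

lemma swap_prod_br:
  assumes n1: "n1 \<le> ldim L1" and n2: "n2 \<le> ldim L2"
  shows "swap_prod L1 n1 L2 n2 (br (prod_gen L2 n2 L1 n1) x y)
    = br (prod_gen L1 n1 L2 n2) (swap_prod L1 n1 L2 n2 x) (swap_prod L1 n1 L2 n2 y)"
  by (rule prod_gen_eqI[OF swap_prod_in_carrier_L br_in_carrier_L])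
    (use n1 n2 in \<open>simp_all add: proj1_br_prod_gen proj2_br_prod_gen proj3_br_prod_gen
       transpose_gen_diff transpose_gen_tensor\<close>)

lemma swap_prod_swap_prod:
  assumes "v \<in> carrier_L (prod_gen L2 n2 L1 n1)"
  shows "swap_prod L2 n2 L1 n1 (swap_prod L1 n1 L2 n2 v) = v"
proof (rule prod_gen_eqI[OF swap_prod_in_carrier_L assms])
  have "\<And>s. n2 * n1 \<le> s \<Longrightarrow> proj3 L2 L1 n2 n1 v s = 0"
    by (simp add: proj3_def)
  then show "proj3 L2 L1 n2 n1 (swap_prod L2 n2 L1 n1 (swap_prod L1 n1 L2 n2 v)) = proj3 L2 L1 n2 n1 v"
    by (simp add: transpose_gen_uminus transpose_gen_transpose_gen)
qed simp_all

lemma swap_prod_second_factor: "b \<in> carrier_L L2 \<Longrightarrow> swap_prod L1 n1 L2 n2 b = emb2 L1 L2 b"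
  by (auto simp: fun_eq_iff swap_prod_def emb2_def carrier_L_def)

lemma derivation_swap_prod:
  assumes n1: "n1 \<le> ldim L1" and n2: "n2 \<le> ldim L2" and D: "derivation (prod_gen L1 n1 L2 n2) D"
  shows "derivation (prod_gen L2 n2 L1 n1) (\<lambda>v. swap_prod L2 n2 L1 n1 (D (swap_prod L1 n1 L2 n2 v)))"
proof -
  let ?s = "swap_prod L1 n1 L2 n2" and ?t = "swap_prod L2 n2 L1 n1"
  let ?P = "prod_gen L1 n1 L2 n2" and ?Q = "prod_gen L2 n2 L1 n1"
  have D_lin: "linear_on (carrier_L ?P) D"
    by (rule derivation_linear_on[OF D])
  show ?thesis
    unfolding derivation_def
  proof (intro conjI ballI allI)
    fix x y assume x: "x \<in> carrier_L ?Q" and y: "y \<in> carrier_L ?Q"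
    have "?t (D (?s (br ?Q x y))) = ?t (br ?P (D (?s x)) (?s y) + br ?P (?s x) (D (?s y)))"
      by (simp add: swap_prod_br[OF n1 n2] derivation_br[OF D] swap_prod_in_carrier_L)
    also have "\<dots> = br ?Q (?t (D (?s x))) (?t (?s y)) + br ?Q (?t (?s x)) (?t (D (?s y)))"
      by (simp add: swap_prod_br[OF n2 n1])
    also have "\<dots> = br ?Q (?t (D (?s x))) y + br ?Q x (?t (D (?s y)))"
      by (simp add: swap_prod_swap_prod x y)
    finally show "?t (D (?s (br ?Q x y))) = br ?Q (?t (D (?s x))) y + br ?Q x (?t (D (?s y)))" .
  qed (simp_all add: swap_prod_in_carrier_L linear_on_add[OF D_lin] linear_on_smul[OF D_lin])
qed

lemma swap_prod_C1:
  assumes "n1 \<le> ldim L1" "n2 \<le> ldim L2" "w \<in> C1 (prod_gen L2 n2 L1 n1)"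
  shows "swap_prod L1 n1 L2 n2 w \<in> C1 (prod_gen L1 n1 L2 n2)"
  by (rule C1_image_subset[OF linear_on_swap_prod csubspace_C1 _ assms(3)])
    (simp add: swap_prod_br assms br_in_C1)

section \<open>Derivations of the product\<close>

lemma derivation_C1:
  assumes D: "derivation L D" and w: "w \<in> C1 L"
  shows "D w \<in> C1 L"
  by (rule C1_image_subset[OF derivation_linear_on[OF D] csubspace_C1 _ w])
    (simp add: derivation_br[OF D] csubspace_add[OF csubspace_C1] br_in_C1)

lemma C1_prod_genI:
  assumes n1: "n1 \<le> ldim L1" and n2: "n2 \<le> ldim L2"
    and w: "w \<in> carrier_L (prod_gen L1 n1 L2 n2)"
    and w1: "proj1 L1 w \<in> C1 L1" and w2: "proj2 L1 L2 w \<in> C1 L2"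
  shows "w \<in> C1 (prod_gen L1 n1 L2 n2)"
proof -
  let ?P = "prod_gen L1 n1 L2 n2"
  have "proj1 L1 w \<in> C1 ?P"
    by (rule C1_image_subset[where f = "\<lambda>x. x", OF _ csubspace_C1 _ w1])
      (simp_all add: linear_onI br_prod_gen_first_factor[OF _ _ n1 n2, symmetric] br_in_C1)
  moreover have "emb2 L1 L2 (proj2 L1 L2 w) \<in> C1 ?P"
    by (rule C1_image_subset[OF linear_on_emb2 csubspace_C1 _ w2])
      (simp add: br_prod_gen_emb2[OF n1 n2, symmetric] br_in_C1)
  moreover have "emb3 L1 L2 n1 n2 (proj3 L1 L2 n1 n2 w) \<in> C1 ?P"
    by (rule emb3_in_C1[OF n1 n2])
  ultimately show ?thesis
    by (subst prod_gen_decomp[OF w]) (intro csubspace_add[OF csubspace_C1])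
qed

lemma derivation_proj1_first_factor:
  assumes n1: "n1 \<le> ldim L1" and n2: "n2 \<le> ldim L2"
    and D: "derivation (prod_gen L1 n1 L2 n2) D"
  shows "derivation L1 (\<lambda>a. proj1 L1 (D a))"
  unfolding derivation_def
proof (intro conjI ballI allI)
  fix x y assume x: "x \<in> carrier_L L1" and y: "y \<in> carrier_L L1"
  then show "proj1 L1 (D (br L1 x y)) = br L1 (proj1 L1 (D x)) y + br L1 x (proj1 L1 (D y))"
    using br_prod_gen_first_factor[OF x y n1 n2, symmetric]
    by (simp add: derivation_br[OF D] carrier_L_first_factor proj1_br_prod_gen proj1_id)
qed (use D in \<open>simp_all add: proj1_in_carrier_L carrier_L_first_factor derivation_def\<close>)

lemma derivation_first_factor_C1:
  assumes S1: "S_algebra L1 n1" and L2: "nna_lie L2" "adapted L2 n2"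
    and der1: "\<forall>f. derivation L1 f \<longrightarrow> f ` carrier_L L1 \<subseteq> C1 L1"
    and D: "derivation (prod_gen L1 n1 L2 n2) D" and a: "a \<in> carrier_L L1"
  shows "D a \<in> C1 (prod_gen L1 n1 L2 n2)"
proof (rule C1_prod_genI)
  show n1: "n1 \<le> ldim L1" and n2: "n2 \<le> ldim L2"
    using S1 L2 by (simp_all add: S_algebra_def adapted_def)
  show "D a \<in> carrier_L (prod_gen L1 n1 L2 n2)"
    using D a by (simp add: derivation_in_carrier_L carrier_L_first_factor)
  show "proj1 L1 (D a) \<in> C1 L1"
    using der1 derivation_proj1_first_factor[OF n1 n2 D] a by blast
  show "proj2 L1 L2 (D a) \<in> C1 L2"
    using S1 L2 D a by (simp add: S_algebra_def)
qed

lemma derivation_second_factor_C1: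
  assumes S2: "S_algebra L2 n2" and L1: "nna_lie L1" "adapted L1 n1"
    and der2: "\<forall>f. derivation L2 f \<longrightarrow> f ` carrier_L L2 \<subseteq> C1 L2"
    and D: "derivation (prod_gen L1 n1 L2 n2) D" and b: "b \<in> carrier_L L2"
  shows "D (emb2 L1 L2 b) \<in> C1 (prod_gen L1 n1 L2 n2)"
proof -
  let ?s = "swap_prod L1 n1 L2 n2" and ?t = "swap_prod L2 n2 L1 n1"
  have n1: "n1 \<le> ldim L1" and n2: "n2 \<le> ldim L2"
    using S2 L1 by (simp_all add: S_algebra_def adapted_def)
  have "?t (D (?s b)) \<in> C1 (prod_gen L2 n2 L1 n1)"
    using derivation_first_factor_C1[OF S2 L1 der2 derivation_swap_prod[OF n1 n2 D] b] .
  then have "?s (?t (D (?s b))) \<in> C1 (prod_gen L1 n1 L2 n2)"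
    by (rule swap_prod_C1[OF n1 n2])
  moreover have "?s (?t (D (?s b))) = D (?s b)"
    by (rule swap_prod_swap_prod) (simp add: derivation_in_carrier_L[OF D] swap_prod_in_carrier_L)
  ultimately show ?thesis
    by (simp add: swap_prod_second_factor[OF b])
qed

lemma derivation_prod_gen_C1:
  assumes S1: "S_algebra L1 n1" and S2: "S_algebra L2 n2"
    and der1: "\<forall>f. derivation L1 f \<longrightarrow> f ` carrier_L L1 \<subseteq> C1 L1"
    and der2: "\<forall>f. derivation L2 f \<longrightarrow> f ` carrier_L L2 \<subseteq> C1 L2"
    and D: "derivation (prod_gen L1 n1 L2 n2) D" and v: "v \<in> carrier_L (prod_gen L1 n1 L2 n2)"
  shows "D v \<in> C1 (prod_gen L1 n1 L2 n2)"
proof -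
  let ?P = "prod_gen L1 n1 L2 n2"
  have L1: "nna_lie L1" "adapted L1 n1" and L2: "nna_lie L2" "adapted L2 n2"
    using S1 S2 by (simp_all add: S_algebra_def)
  then have n1: "n1 \<le> ldim L1" and n2: "n2 \<le> ldim L2"
    by (simp_all add: adapted_def)
  define a b z where "a = proj1 L1 v" and "b = proj2 L1 L2 v"
    and "z = emb3 L1 L2 n1 n2 (proj3 L1 L2 n1 n2 v)"
  have a: "a \<in> carrier_L L1" and z: "z \<in> carrier_L ?P"
    by (simp_all add: a_def z_def proj1_in_carrier_L emb3_in_carrier_L)
  have "v = a + emb2 L1 L2 b + z"
    unfolding a_def b_def z_def by (rule prod_gen_decomp[OF v])
  then have "D v = D a + D (emb2 L1 L2 b) + D z"
    using a z by (simp add: linear_on_add[OF derivation_linear_on[OF D]]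
        carrier_L_first_factor emb2_in_carrier_L csubspace_add[OF csubspace_carrier_L])
  moreover have "D a \<in> C1 ?P"
    by (rule derivation_first_factor_C1[OF S1 L2 der1 D a])
  moreover have "D (emb2 L1 L2 b) \<in> C1 ?P"
    by (rule derivation_second_factor_C1[OF S2 L1 der2 D]) (simp add: b_def proj2_in_carrier_L)
  moreover have "D z \<in> C1 ?P"
    unfolding z_def by (rule derivation_C1[OF D emb3_in_C1[OF n1 n2]])
  ultimately show ?thesis
    by (simp add: csubspace_add[OF csubspace_C1])
qed

theorem mainTheorem12:
  fixes L1 L2 :: lie_sc and n1 n2 :: nat
  assumes "nna_lie L1" and "nna_lie L2"
    and "adapted L1 n1" and "adapted L2 n2"
    and "S_algebra L1 n1" and "S_algebra L2 n2"
    and "\<forall>f. derivation L1 f \<longrightarrow> f ` carrier_L L1 \<subseteq> C1 L1"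
    and "\<forall>f. derivation L2 f \<longrightarrow> f ` carrier_L L2 \<subseteq> C1 L2"
  shows "char_nilpotent (prod_gen L1 n1 L2 n2)
    \<and> (\<forall>D. derivation (prod_gen L1 n1 L2 n2) D \<longrightarrow>
           D ` carrier_L (prod_gen L1 n1 L2 n2) \<subseteq> C1 (prod_gen L1 n1 L2 n2))"
proof -
  let ?P = "prod_gen L1 n1 L2 n2"
  have derivations_C1: "D ` carrier_L ?P \<subseteq> C1 ?P" if "derivation ?P D" for D
    using derivation_prod_gen_C1[OF assms(5-8) that] by blast
  have "lie_algebra ?P"
    using assms(1-4) by (intro lie_algebra_prod_gen) (simp_all add: nna_lie_def)
  moreover have "nilpotent_L ?P"
    using assms(1-4) by (intro nilpotent_prod_gen) (simp_all add: nna_lie_def)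
  ultimately have "char_nilpotent ?P"
    using derivations_C1 by (rule char_nilpotent_if_derivations_into_C1)
  with derivations_C1 show ?thesis
    by blast
qed

end
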